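(* Let $pqr$ be a non-degenerate triangle in $\mathbb{R}^2$ and let $\tau(p),\tau(q),\tau(r)$ be real numbers with $\tau(p)\le\tau(q)\le\tau(r)$. Let $\sigma>0$ and suppose $\|\nabla\tau\|<\sigma$. Let $0<\varepsilon<1$ and $d_p:=\operatorname{dist}(p,\operatorname{aff}(qr))$. For $\delta\ge0$ let $\tau'_\delta$ denote the affine function on $\mathbb{R}^2$ with $\tau'_\delta(p)=\tau(p)+\delta$, $\tau'_\delta(q)=\tau(q)$, $\tau'_\delta(r)=\tau(r)$. (1) If $\angle pqr\le\pi/2$ and $\frac{\tau(r)-\tau(q)}{|qr|}\le(1-\varepsilon)\sigma$, then $\|\nabla\tau'_\delta\|<\sigma$ for every $\delta\in[0,\varepsilon\, d_p\,\sigma]$. (2) If $\pi/2<\angle pqr<\pi$ and $\frac{\tau(r)-\tau(q)}{|qr|}\le(1-\varepsilon)\,\sigma\,\sin\angle pqr$, then $\|\nabla\tau'_\delta\|<\sigma$ for every $\delta\in[0,\varepsilon\, d_p\,\sigma]$.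
   Context: Given real values at the three vertices of a triangle, $\tau$ also denotes the unique affine function $\mathbb{R}^2\to\mathbb{R}$ interpolating them, and $\nabla\tau\in\mathbb{R}^2$ is its (constant) gradient with Euclidean norm $\|\nabla\tau\|$. $\operatorname{aff}(qr)$ is the line through $q$ and $r$, and $|qr|$ the length of segment $qr$. *)

theory Defs
  imports "HOL-Analysis.Analysis"
begin

definition tri_grad :: "real^2 \<Rightarrow> real^2 \<Rightarrow> real^2 \<Rightarrow> real \<Rightarrow> real \<Rightarrow> real \<Rightarrow> real^2" where
  "tri_grad p q r a b c =
     (THE g. \<exists>k. g \<bullet> p + k = a \<and> g \<bullet> q + k = b \<and> g \<bullet> r + k = c)"

definition vertex_angle :: "real^2 \<Rightarrow> real^2 \<Rightarrow> real^2 \<Rightarrow> real" where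
  "vertex_angle p q r = arccos (((p - q) \<bullet> (r - q)) / (norm (p - q) * norm (r - q)))"

end

theory Submission
  imports Defs
begin

text \<open>
  The proof works in an orthonormal frame (u, n) attached to the edge qr: u is the
  unit vector from q to r and n the unit normal pointing towards p.  In this frame

  \<^item> the gradient g has u-component a = (\<tau>(r) - \<tau>(q)) / |qr| and some n-component B;
  \<^item> p - q = |pq| (cos \<theta>, sin \<theta>) with \<theta> the angle at q, so \<tau>(p) \<le> \<tau>(q)
    says a cos \<theta> + B sin \<theta> \<le> 0;
  \<^item> raising \<tau>(p) by \<delta> adds (\<delta> / h) n to the gradient, h the height of p,
    and \<delta> / h \<le> \<epsilon> \<sigma>.

  The theorem thus reduces to a planar estimate on real numbers
  (raised_component_bound): the point (a, B + t) stays in the open disc of radius \<sigma>.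
\<close>

definition perp :: "real^2 \<Rightarrow> real^2" where
  "perp u = vector [-(u$2), u$1]"

lemma inner_real2: "(x::real^2) \<bullet> y = x$1 * y$1 + x$2 * y$2"
  by (simp add: inner_vec_def sum_2)

lemma perp_orthogonal: "u \<bullet> perp u = 0"
  by (simp add: perp_def inner_real2)

lemma frame_decomp:
  assumes u: "norm u = 1" and n: "n = perp u \<or> n = - perp u"
  shows "x = (x \<bullet> u) *\<^sub>R u + (x \<bullet> n) *\<^sub>R n"
proof -
  have "u$1 * u$1 + u$2 * u$2 = 1"
    using u by (simp add: norm_eq_sqrt_inner inner_real2)
  then have "x = (x \<bullet> u) *\<^sub>R u + (x \<bullet> perp u) *\<^sub>R perp u"
    by (simp add: vec_eq_iff forall_2 perp_def inner_real2) algebra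
  then show ?thesis using n by auto
qed

lemma frame_orthonormal:
  assumes "norm u = 1" and "n = perp u \<or> n = - perp u"
  shows "u \<bullet> n = 0" and "n \<bullet> n = 1"
  using assms perp_orthogonal[of u]
  by (auto simp: perp_def inner_real2 norm_eq_sqrt_inner algebra_simps)

lemma frame_inner:
  assumes "norm u = 1" and "n = perp u \<or> n = - perp u"
  shows "x \<bullet> y = (x \<bullet> u) * (y \<bullet> u) + (x \<bullet> n) * (y \<bullet> n)"
proof -
  have un: "u \<bullet> n = 0" "u \<bullet> u = 1" "n \<bullet> n = 1"
    using assms frame_orthonormal[OF assms] by (auto simp: norm_eq_sqrt_inner)
  have "x \<bullet> y = ((x \<bullet> u) *\<^sub>R u + (x \<bullet> n) *\<^sub>R n) \<bullet> y"
    using frame_decomp[OF assms, of x] by simp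
  also have "\<dots> = ((x \<bullet> u) *\<^sub>R u + (x \<bullet> n) *\<^sub>R n) \<bullet> ((y \<bullet> u) *\<^sub>R u + (y \<bullet> n) *\<^sub>R n)"
    using frame_decomp[OF assms, of y] by simp
  also have "\<dots> = (x \<bullet> u) * (y \<bullet> u) + (x \<bullet> n) * (y \<bullet> n)"
    using un by (simp add: inner_add_left inner_add_right inner_commute[of n u])
  finally show ?thesis .
qed

lemma frame_norm_sq:
  assumes "norm u = 1" and "n = perp u \<or> n = - perp u"
  shows "(norm x)\<^sup>2 = (x \<bullet> u)\<^sup>2 + (x \<bullet> n)\<^sup>2"
  unfolding power2_norm_eq_inner using frame_inner[OF assms, of x x] by (simp add: power2_eq_square)

lemma triangle_frame:
  fixes p q r :: "real^2"
  assumes "\<not> collinear {p, q, r}"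
  obtains u n where "norm u = 1" "n = perp u \<or> n = - perp u"
    "0 < dist q r" "r - q = dist q r *\<^sub>R u" "(p - q) \<bullet> n > 0"
proof -
  have nc: "\<not> collinear {0, r - q, p - q}"
    using assms collinear_3[of p q r] by (simp add: NO_MATCH_def insert_commute)
  then have rq: "r - q \<noteq> 0" by (auto simp: collinear_lemma)
  define u where "u = (1 / dist q r) *\<^sub>R (r - q)"
  have u: "norm u = 1" "0 < dist q r" "r - q = dist q r *\<^sub>R u"
    using rq by (auto simp: u_def dist_norm norm_minus_commute)
  have pn: "(p - q) \<bullet> perp u \<noteq> 0"
  proof
    assume "(p - q) \<bullet> perp u = 0"
    then have "p - q = ((p - q) \<bullet> u / dist q r) *\<^sub>R (r - q)"
      using frame_decomp[OF u(1), of "perp u" "p - q"] u(3) rq by simp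
    then show False using nc by (auto simp: collinear_lemma)
  qed
  show thesis
  proof (cases "(p - q) \<bullet> perp u > 0")
    case True
    then show thesis using that[OF u(1) _ u(2,3)] by blast
  next
    case False
    then show thesis using that[OF u(1) _ u(2,3), of "- perp u"] pn by simp
  qed
qed

text \<open>Uniqueness holds because a vector orthogonal to both edges vanishes;
  existence is shown by an explicit vector in frame coordinates.\<close>

lemma tri_grad_eq_iff:
  fixes p q r :: "real^2"
  assumes "\<not> collinear {p, q, r}"
  shows "tri_grad p q r a b c = g \<longleftrightarrow> g \<bullet> (r - q) = c - b \<and> g \<bullet> (p - q) = a - b"
proof -
  obtain u n where u: "norm u = 1" "n = perp u \<or> n = - perp u"
    and L: "0 < dist q r" and r: "r - q = dist q r *\<^sub>R u" and h: "(p - q) \<bullet> n > 0"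
    using triangle_frame[OF assms] .
  define Q where "Q g \<longleftrightarrow> g \<bullet> (r - q) = c - b \<and> g \<bullet> (p - q) = a - b" for g
  have affine_iff: "(\<exists>k. g \<bullet> p + k = a \<and> g \<bullet> q + k = b \<and> g \<bullet> r + k = c) \<longleftrightarrow> Q g" for g
    unfolding Q_def
    by (auto simp: inner_diff_right intro: exI[of _ "b - g \<bullet> q"])
  have uniq: "g = g'" if "Q g" "Q g'" for g g'
  proof -
    have "(g - g') \<bullet> (r - q) = 0" "(g - g') \<bullet> (p - q) = 0"
      using that by (auto simp: Q_def inner_diff_left)
    then have "(g - g') \<bullet> u = 0" "(g - g') \<bullet> (p - q) = 0"
      using L by (auto simp: r)
    moreover have "(g - g') \<bullet> (p - q) = ((g - g') \<bullet> n) * ((p - q) \<bullet> n)"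
      using frame_inner[OF u, of "g - g'" "p - q"] calculation(1) by simp
    ultimately have "(g - g') \<bullet> n = 0" using h by simp
    then show "g = g'"
      using frame_decomp[OF u, of "g - g'"] \<open>(g - g') \<bullet> u = 0\<close> by simp
  qed
  define g0 where "g0 = ((c - b) / dist q r) *\<^sub>R u
    + (((a - b) - (c - b) / dist q r * ((p - q) \<bullet> u)) / ((p - q) \<bullet> n)) *\<^sub>R n"
  have "u \<bullet> n = 0" "u \<bullet> u = 1" "n \<bullet> n = 1"
    using u frame_orthonormal[OF u] by (auto simp: norm_eq_sqrt_inner)
  then have g0u: "g0 \<bullet> u = (c - b) / dist q r"
    and g0n: "g0 \<bullet> n = ((a - b) - (c - b) / dist q r * ((p - q) \<bullet> u)) / ((p - q) \<bullet> n)"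
    by (simp_all add: g0_def inner_add_left inner_commute[of n u])
  have "g0 \<bullet> (p - q) = (g0 \<bullet> u) * ((p - q) \<bullet> u) + (g0 \<bullet> n) * ((p - q) \<bullet> n)"
    by (rule frame_inner[OF u])
  also have "\<dots> = a - b" using h by (simp add: g0u g0n)
  finally have "Q g0" using L g0u unfolding Q_def r by simp
  then have "Q (tri_grad p q r a b c)"
    unfolding tri_grad_def affine_iff by (rule theI[of Q, OF _ uniq[OF _ \<open>Q g0\<close>]])
  then show ?thesis using uniq unfolding Q_def by blast
qed

lemma tri_grad_raise_vertex:
  fixes p q r n :: "real^2"
  assumes "\<not> collinear {p, q, r}" and "n \<bullet> (r - q) = 0" and "(p - q) \<bullet> n \<noteq> 0"
  shows "tri_grad p q r (a + \<delta>) b c = tri_grad p q r a b c + (\<delta> / ((p - q) \<bullet> n)) *\<^sub>R n"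
proof -
  have "tri_grad p q r a b c \<bullet> (r - q) = c - b" "tri_grad p q r a b c \<bullet> (p - q) = a - b"
    using tri_grad_eq_iff[OF assms(1)] by blast+
  then show ?thesis
    using assms(2,3) unfolding tri_grad_eq_iff[OF assms(1)]
    by (simp add: inner_add_left inner_commute[of n "p - q"])
qed

lemma vertex_angle_frame:
  fixes p q r u n :: "real^2"
  assumes u: "norm u = 1" "n = perp u \<or> n = - perp u"
    and r: "0 < L" "r - q = L *\<^sub>R u" and h: "(p - q) \<bullet> n > 0"
  shows "(p - q) \<bullet> u = norm (p - q) * cos (vertex_angle p q r)"
    and "(p - q) \<bullet> n = norm (p - q) * sin (vertex_angle p q r)"
    and "0 < vertex_angle p q r" "vertex_angle p q r < pi"
proof -
  define x where "x = ((p - q) \<bullet> u) / norm (p - q)"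
  have P: "norm (p - q) > 0" using h by auto
  have angle: "vertex_angle p q r = arccos x"
    using r u unfolding vertex_angle_def x_def by simp
  have x: "\<bar>x\<bar> \<le> 1"
    using P Cauchy_Schwarz_ineq2[of "p - q" u] u(1) by (simp add: x_def abs_divide)
  then have "cos (vertex_angle p q r) = x" by (simp add: angle cos_arccos_abs)
  then show cos: "(p - q) \<bullet> u = norm (p - q) * cos (vertex_angle p q r)"
    using P by (simp add: x_def)
  from frame_norm_sq[OF u, of "p - q"] have "((p - q) \<bullet> n)\<^sup>2 = (norm (p - q) * sin (vertex_angle p q r))\<^sup>2"
    unfolding cos by (simp add: power_mult_distrib sin_squared_eq algebra_simps)
  moreover have "sin (vertex_angle p q r) \<ge> 0"
    using x by (simp add: angle sin_arccos_abs abs_square_le_1)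
  ultimately show sin: "(p - q) \<bullet> n = norm (p - q) * sin (vertex_angle p q r)"
    using h P by (simp add: power2_eq_iff_nonneg)
  have "0 \<le> vertex_angle p q r" "vertex_angle p q r \<le> pi"
    using x by (simp_all add: angle arccos_lbound arccos_ubound)
  moreover have "sin (vertex_angle p q r) \<noteq> 0"
    using h sin by auto
  ultimately show "0 < vertex_angle p q r" "vertex_angle p q r < pi"
    by (auto simp: order_le_less)
qed

text \<open>The distance from p to the line qr is at most the height of p over it, since the
  foot of the perpendicular lies on the line.\<close>

lemma infdist_line_le:
  fixes p q r u n :: "real^2"
  assumes u: "norm u = 1" "n = perp u \<or> n = - perp u" and r: "L \<noteq> 0" "r - q = L *\<^sub>R u"
  shows "infdist p (affine hull {q, r}) \<le> \<bar>(p - q) \<bullet> n\<bar>"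
proof -
  define c where "c = ((p - q) \<bullet> u) / L"
  have foot: "q + c *\<^sub>R (r - q) \<in> affine hull {q, r}"
    unfolding affine_hull_2 by (rule CollectI, rule exI[of _ "1 - c"], rule exI[of _ c])
      (simp add: algebra_simps)
  have "c *\<^sub>R (r - q) = ((p - q) \<bullet> u) *\<^sub>R u"
    using r by (simp add: c_def)
  then have "p - (q + c *\<^sub>R (r - q)) = (p - q) - ((p - q) \<bullet> u) *\<^sub>R u"
    by (simp add: algebra_simps)
  also have "\<dots> = ((p - q) \<bullet> n) *\<^sub>R n"
    using frame_decomp[OF u, of "p - q"] by (metis add_diff_cancel_left')
  moreover have "norm n = 1"
    using frame_orthonormal(2)[OF u] by (simp add: norm_eq_sqrt_inner)
  ultimately have "dist p (q + c *\<^sub>R (r - q)) = \<bar>(p - q) \<bullet> n\<bar>"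
    by (simp add: dist_norm)
  then show ?thesis using infdist_le[OF foot, of p] by simp
qed

lemma tri_grad_frame_coordinates:
  fixes p q r u n :: "real^2" and a b c :: real
  assumes nondeg: "\<not> collinear {p, q, r}"
    and u: "norm u = 1" "n = perp u \<or> n = - perp u"
    and r: "0 < dist q r" "r - q = dist q r *\<^sub>R u" and h: "(p - q) \<bullet> n > 0"
  defines "g \<equiv> tri_grad p q r a b c" and "\<theta> \<equiv> vertex_angle p q r"
  shows "g \<bullet> u = (c - b) / dist q r"
    and "norm (p - q) * ((g \<bullet> u) * cos \<theta> + (g \<bullet> n) * sin \<theta>) = a - b"
proof -
  have "g \<bullet> (r - q) = c - b" "g \<bullet> (p - q) = a - b"
    using tri_grad_eq_iff[OF nondeg] unfolding g_def by blast+
  then show "g \<bullet> u = (c - b) / dist q r"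
    and "norm (p - q) * ((g \<bullet> u) * cos \<theta> + (g \<bullet> n) * sin \<theta>) = a - b"
    using r frame_inner[OF u, of g "p - q"] vertex_angle_frame[OF u r h]
    by (auto simp: \<theta>_def field_simps)
qed

text \<open>A point whose coordinates are bounded by (1 - \<epsilon>) \<sigma> (s, c) + (0, \<epsilon> \<sigma>), with (c, s)
  on the unit circle and c < 1, lies in the open disc of radius \<sigma>: the triangle
  inequality is strict because the two summands are not parallel.\<close>

lemma sum_squares_in_disc:
  fixes a b c s \<sigma> \<epsilon> :: real
  assumes a: "0 \<le> a" "a \<le> (1 - \<epsilon>) * \<sigma> * s" and b: "0 \<le> b" "b \<le> (1 - \<epsilon>) * \<sigma> * c + \<epsilon> * \<sigma>"
    and c: "0 \<le> c" "c < 1" "c\<^sup>2 + s\<^sup>2 = 1" and eps: "0 < \<epsilon>" "\<epsilon> < 1" and sig: "0 < \<sigma>"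
  shows "a\<^sup>2 + b\<^sup>2 < \<sigma>\<^sup>2"
proof -
  have "a\<^sup>2 + b\<^sup>2 \<le> ((1 - \<epsilon>) * \<sigma> * s)\<^sup>2 + ((1 - \<epsilon>) * \<sigma> * c + \<epsilon> * \<sigma>)\<^sup>2"
    using a b by (intro add_mono power_mono) auto
  also have "\<dots> = \<sigma>\<^sup>2 * ((1 - \<epsilon>)\<^sup>2 * (c\<^sup>2 + s\<^sup>2) + 2 * \<epsilon> * (1 - \<epsilon>) * c + \<epsilon>\<^sup>2)"
    by (simp add: power2_eq_square algebra_simps)
  also have "\<dots> = \<sigma>\<^sup>2 - \<sigma>\<^sup>2 * (2 * \<epsilon> * (1 - \<epsilon>) * (1 - c))"
    using c(3) by (simp add: power2_eq_square algebra_simps)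
  also have "\<dots> < \<sigma>\<^sup>2"
    using eps sig c(2) by simp
  finally show ?thesis .
qed

text \<open>For an acute angle B \<le> 0, and for
  an obtuse angle B \<le> (1 - \<epsilon>) \<sigma> |cos \<theta>|; both cases feed sum_squares_in_disc.\<close>

lemma raised_component_bound:
  fixes a B t \<theta> \<sigma> \<epsilon> :: real
  assumes a: "0 \<le> a" and \<theta>: "0 < \<theta>" "\<theta> < pi"
    and B: "a\<^sup>2 + B\<^sup>2 < \<sigma>\<^sup>2" and below: "a * cos \<theta> + B * sin \<theta> \<le> 0"
    and t: "0 \<le> t" "t \<le> \<epsilon> * \<sigma>" and eps: "0 < \<epsilon>" "\<epsilon> < 1" and sig: "0 < \<sigma>"
    and angle: "(\<theta> \<le> pi / 2 \<and> a \<le> (1 - \<epsilon>) * \<sigma>) \<or> (pi / 2 < \<theta> \<and> a \<le> (1 - \<epsilon>) * \<sigma> * sin \<theta>)"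
  shows "a\<^sup>2 + (B + t)\<^sup>2 < \<sigma>\<^sup>2"
proof (cases "B + t \<le> 0")
  case True
  then have "(B + t)\<^sup>2 \<le> B\<^sup>2" using t by (simp add: abs_le_square_iff[symmetric])
  then show ?thesis using B by linarith
next
  case False
  have sin: "sin \<theta> > 0" using \<theta> by (rule sin_gt_zero)
  obtain c s where "0 \<le> c" "c < 1" "c\<^sup>2 + s\<^sup>2 = 1"
    and "a \<le> (1 - \<epsilon>) * \<sigma> * s" "B \<le> (1 - \<epsilon>) * \<sigma> * c"
    using angle
  proof
    assume acute: "\<theta> \<le> pi / 2 \<and> a \<le> (1 - \<epsilon>) * \<sigma>"
    then have "0 \<le> cos \<theta>" using \<theta> by (intro cos_ge_zero) auto
    then have "B * sin \<theta> \<le> 0" using below a by (smt (verit) mult_nonneg_nonneg)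
    then have "B \<le> 0" using sin by (simp add: mult_le_0_iff)
    then show thesis using that[of 0 1] acute by simp
  next
    assume obtuse: "pi / 2 < \<theta> \<and> a \<le> (1 - \<epsilon>) * \<sigma> * sin \<theta>"
    have "0 < cos (pi - \<theta>)" using obtuse \<theta> by (intro cos_gt_zero_pi) auto
    then have cos: "0 \<le> - cos \<theta>" by simp
    have "(cos \<theta>)\<^sup>2 < 1" using sin sin_cos_squared_add[of \<theta>] by (smt (verit) zero_less_power)
    then have "- cos \<theta> < 1" by (simp add: abs_square_less_1 abs_less_iff)
    have "B * sin \<theta> \<le> a * (- cos \<theta>)" using below by simp
    also have "\<dots> \<le> (1 - \<epsilon>) * \<sigma> * sin \<theta> * (- cos \<theta>)"
      using obtuse cos by (intro mult_right_mono) auto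
    finally have "B * sin \<theta> \<le> ((1 - \<epsilon>) * \<sigma> * (- cos \<theta>)) * sin \<theta>"
      by (simp add: algebra_simps)
    then have "B \<le> (1 - \<epsilon>) * \<sigma> * (- cos \<theta>)"
      using sin by (simp only: mult_le_cancel_right_pos)
    then show thesis
      using that[of "- cos \<theta>" "sin \<theta>"] cos \<open>- cos \<theta> < 1\<close> obtuse by simp
  qed
  then show ?thesis
    using False a t eps sig
    by (intro sum_squares_in_disc[where c = c and s = s and \<epsilon> = \<epsilon>]) auto
qed

lemma raised_gradient_norm_bound:
  fixes p q r :: "real^2" and tp tq tr \<sigma> \<epsilon> \<delta> :: real
  assumes nondeg: "\<not> collinear {p, q, r}"
    and ord: "tp \<le> tq" "tq \<le> tr"
    and sig: "\<sigma> > 0"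
    and grad: "norm (tri_grad p q r tp tq tr) < \<sigma>"
    and eps: "0 < \<epsilon>" "\<epsilon> < 1"
    and del: "0 \<le> \<delta>" "\<delta> \<le> \<epsilon> * infdist p (affine hull {q, r}) * \<sigma>"
    and angle: "(vertex_angle p q r \<le> pi / 2 \<and> (tr - tq) / dist q r \<le> (1 - \<epsilon>) * \<sigma>) \<or>
      (pi / 2 < vertex_angle p q r \<and>
       (tr - tq) / dist q r \<le> (1 - \<epsilon>) * \<sigma> * sin (vertex_angle p q r))"
  shows "norm (tri_grad p q r (tp + \<delta>) tq tr) < \<sigma>"
proof -
  obtain u n where u: "norm u = 1" "n = perp u \<or> n = - perp u"
    and L: "0 < dist q r" and r: "r - q = dist q r *\<^sub>R u" and h: "(p - q) \<bullet> n > 0"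
    using triangle_frame[OF nondeg] .
  define \<theta> where "\<theta> = vertex_angle p q r"
  define g where "g = tri_grad p q r tp tq tr"
  define a where "a = g \<bullet> u"
  define B where "B = g \<bullet> n"
  define t where "t = \<delta> / ((p - q) \<bullet> n)"
  have un: "u \<bullet> n = 0" "n \<bullet> n = 1" using frame_orthonormal[OF u] .
  have \<theta>: "0 < \<theta>" "\<theta> < pi"
    using vertex_angle_frame[OF u L r h] by (simp_all add: \<theta>_def)
  have a: "a = (tr - tq) / dist q r"
    and gP: "norm (p - q) * (a * cos \<theta> + B * sin \<theta>) = tp - tq"
    using tri_grad_frame_coordinates[OF nondeg u L r h]
    unfolding a_def B_def g_def \<theta>_def by simp_all
  have "0 < norm (p - q)" using h by auto
  with gP ord have below: "a * cos \<theta> + B * sin \<theta> \<le> 0"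
    by (smt (verit) mult_pos_pos)
  have "a\<^sup>2 + B\<^sup>2 < \<sigma>\<^sup>2"
    using grad frame_norm_sq[OF u, of g] unfolding a_def B_def g_def
    by (metis norm_ge_zero power_strict_mono zero_less_numeral)
  moreover have "t \<le> \<epsilon> * \<sigma>"
  proof -
    have "\<delta> \<le> \<epsilon> * \<sigma> * ((p - q) \<bullet> n)"
      using del(2) infdist_line_le[OF u _ r, of p] L h eps sig
      by (smt (verit) mult_left_mono mult_pos_pos mult.commute mult.assoc)
    then show ?thesis using h by (simp add: t_def divide_le_eq)
  qed
  ultimately have bound: "a\<^sup>2 + (B + t)\<^sup>2 < \<sigma>\<^sup>2"
    using raised_component_bound[OF _ \<theta> _ below _ _ eps sig] angle a ord L h del(1)
    by (auto simp: \<theta>_def t_def)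
  have raised: "tri_grad p q r (tp + \<delta>) tq tr = g + t *\<^sub>R n"
    using tri_grad_raise_vertex[OF nondeg, of n] un r h by (simp add: g_def t_def inner_commute)
  have "(g + t *\<^sub>R n) \<bullet> u = a" "(g + t *\<^sub>R n) \<bullet> n = B + t"
    using un by (simp_all add: a_def B_def inner_add_left inner_commute[of n u])
  then have "(norm (tri_grad p q r (tp + \<delta>) tq tr))\<^sup>2 = a\<^sup>2 + (B + t)\<^sup>2"
    unfolding raised using frame_norm_sq[OF u, of "g + t *\<^sub>R n"] by simp
  with bound show ?thesis
    using sig by (metis power_less_imp_less_base less_imp_le)
qed

theorem mainTheorem3:
  fixes p q r :: "real^2" and tp tq tr \<sigma> \<epsilon> :: real
  assumes nondeg: "\<not> collinear {p, q, r}"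
    and ord: "tp \<le> tq" "tq \<le> tr"
    and sig: "\<sigma> > 0"
    and grad: "norm (tri_grad p q r tp tq tr) < \<sigma>"
    and eps: "0 < \<epsilon>" "\<epsilon> < 1"
  shows
    "(vertex_angle p q r \<le> pi / 2 \<and> (tr - tq) / dist q r \<le> (1 - \<epsilon>) * \<sigma> \<longrightarrow>
        (\<forall>\<delta>. 0 \<le> \<delta> \<and> \<delta> \<le> \<epsilon> * infdist p (affine hull {q, r}) * \<sigma> \<longrightarrow>
           norm (tri_grad p q r (tp + \<delta>) tq tr) < \<sigma>))
     \<and>
     (pi / 2 < vertex_angle p q r \<and> vertex_angle p q r < pi \<and>
      (tr - tq) / dist q r \<le> (1 - \<epsilon>) * \<sigma> * sin (vertex_angle p q r) \<longrightarrow>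
        (\<forall>\<delta>. 0 \<le> \<delta> \<and> \<delta> \<le> \<epsilon> * infdist p (affine hull {q, r}) * \<sigma> \<longrightarrow>
           norm (tri_grad p q r (tp + \<delta>) tq tr) < \<sigma>))"
  using raised_gradient_norm_bound[OF nondeg ord sig grad eps] by blast

end
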